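(* Let $n,d,r$ be positive integers with $r\le d\le n$. Let $F\in\mathbb{R}^{d\times n}$ have rank $d$, with compact SVD $F=U_F\Sigma_F V_F^\top$ ($V_F\in\mathbb{R}^{n\times d}$ with orthonormal columns), and suppose $\max_{i}\|e_i^\top V_F\|_2\le \mu\sqrt{d/n}$; let $\kappa=\sigma_{\max}(F)/\sigma_{\min}(F)$. Let $W^*\in\mathbb{R}^{d\times d}$ be symmetric of rank $r$ with $\|W^*\|_2\le c_W$, $L^*=F^\top W^*F$, let $S^*\in\mathbb{R}^{n\times n}$ be symmetric with at most $z$ nonzero entries per row and per column, $z\le n/(20\mu^2d\kappa)$, and let $N^*\in\mathbb{R}^{n\times n}$ be symmetric with $\|N^*\|_\infty\le1/(40\mu^2d\kappa^2)$. Let $M=L^*+S^*+N^*$. Let $t\ge1$ be an integer, let $\zeta_t=\mu^2\sigma_{\max}^2(F)\frac{d}{n}\frac{c_W}{5^{t-1}}+(3\mu^2d\kappa^2+1)\|N^*\|_\infty$, and let $L_{t-1}\in\mathbb{R}^{n\times n}$ satisfy $\|L^*-L_{t-1}\|_\infty\le\mu^2\sigma_{\max}^2(F)\frac{d}{n}\frac{c_W}{5^{t-1}}+3\mu^2d\kappa^2\|N^*\|_\infty$. Define $S_t=\mathcal{P}_{\zeta_t}(M-L_{t-1})$. Then $\|S^*-S_t\|_\infty\le2\mu^2\sigma_{\max}^2(F)\frac{d}{n}\frac{c_W}{5^{t-1}}+2(3\mu^2d\kappa^2+1)\|N^*\|_\infty$ and $\operatorname{Supp}(S_t)\subseteq\operatorname{Supp}(S^*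 )$.
   Context: $e_i$ is the $i$-th standard basis vector; $\sigma_{\max}(F),\sigma_{\min}(F)$ are the largest and smallest of the $d$ singular values of $F$. $\|A\|_\infty=\max_{i,j}|A_{ij}|$, $\|A\|_2$ is the spectral norm, $\operatorname{Supp}(A)$ is the set of indices of nonzero entries. For $a\ge0$, $\mathcal{P}_a(A)$ is entrywise hard thresholding: $(\mathcal{P}_a(A))_{ij}=A_{ij}$ if $|A_{ij}|>a$ and $0$ otherwise. *)

theory Defs
  imports "HOL-Analysis.Analysis"
begin

definition max_abs :: "real^'n^'m \<Rightarrow> real" where
  "max_abs A = Max {\<bar>A $ i $ j\<bar> | i j. True}"

definition spec_norm :: "real^'n^'m \<Rightarrow> real" where
  "spec_norm A = onorm (\<lambda>x. A *v x)"

definition Supp :: "real^'n^'m \<Rightarrow> ('m \<times> 'n) set" where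
  "Supp A = {(i, j). A $ i $ j \<noteq> 0}"

definition hard_thr :: "real \<Rightarrow> real^'n^'m \<Rightarrow> real^'n^'m" where
  "hard_thr a A = (\<chi> i j. if \<bar>A $ i $ j\<bar> > a then A $ i $ j else 0)"

definition compact_svd :: "real^'n^'d \<Rightarrow> real^'d^'d \<Rightarrow> real^'d^'d \<Rightarrow> real^'d^'n \<Rightarrow> bool" where
  "compact_svd F U Sg V \<longleftrightarrow>
     transpose U ** U = mat 1 \<and> transpose V ** V = mat 1 \<and>
     (\<forall>i j. i \<noteq> j \<longrightarrow> Sg $ i $ j = 0) \<and> (\<forall>i. Sg $ i $ i > 0) \<and>
     F = U ** Sg ** transpose V"

definition sig_max :: "real^'d^'d \<Rightarrow> real" where
  "sig_max Sg = Max (range (\<lambda>i. Sg $ i $ i))"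
definition sig_min :: "real^'d^'d \<Rightarrow> real" where
  "sig_min Sg = Min (range (\<lambda>i. Sg $ i $ i))"

end

theory Submission
  imports Defs
begin

text \<open>Write \<open>M - L\<^sub>t\<^sub>-\<^sub>1 = S\<^sup>* + E\<close> with \<open>E = (L\<^sup>* - L\<^sub>t\<^sub>-\<^sub>1) + N\<^sup>*\<close>. The threshold \<open>\<zeta>\<^sub>t\<close>
  dominates every entry of \<open>E\<close>, so thresholding kills every entry where \<open>S\<^sup>*\<close> vanishes,
  and on the remaining entries the error is either \<open>|E|\<close> (entry kept) or \<open>|S\<^sup>*|\<close> with
  \<open>|S\<^sup>* + E| \<le> \<zeta>\<^sub>t\<close> (entry killed); in both cases it is at most \<open>2\<zeta>\<^sub>t\<close>. None of the
  incoherence, rank or sparsity hypotheses is needed for this step.\<close>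

lemma finite_abs_entries: "finite {\<bar>A $ i $ j\<bar> | i j. True}"
proof -
  have "{\<bar>A $ i $ j\<bar> | i j. True} = (\<lambda>(i, j). \<bar>A $ i $ j\<bar>) ` UNIV" by auto
  then show ?thesis by simp
qed

lemma abs_entry_le_max_abs: "\<bar>A $ i $ j\<bar> \<le> max_abs A"
  unfolding max_abs_def by (rule Max_ge[OF finite_abs_entries]) auto

lemma max_abs_le:
  assumes "\<And>i j. \<bar>A $ i $ j\<bar> \<le> c"
  shows "max_abs A \<le> c"
  unfolding max_abs_def
  by (rule Max.boundedI[OF finite_abs_entries]) (use assms in auto)

lemma abs_sub_hard_thr_entry:
  fixes s e a :: real
  assumes "\<bar>e\<bar> \<le> a"
  shows "\<bar>s - (if \<bar>s + e\<bar> > a then s + e else 0)\<bar> \<le> 2 * a"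
    and "\<bar>s + e\<bar> > a \<Longrightarrow> s \<noteq> 0"
  using assms by auto

lemma hard_thr_perturbation:
  fixes S E :: "real^'n^'m"
  assumes "max_abs E \<le> a"
  shows "max_abs (S - hard_thr a (S + E)) \<le> 2 * a"
    and "Supp (hard_thr a (S + E)) \<subseteq> Supp S"
proof -
  have E_entry: "\<bar>E $ i $ j\<bar> \<le> a" for i j
    using abs_entry_le_max_abs[of E i j] assms by simp
  show "max_abs (S - hard_thr a (S + E)) \<le> 2 * a"
  proof (rule max_abs_le)
    fix i j
    show "\<bar>(S - hard_thr a (S + E)) $ i $ j\<bar> \<le> 2 * a"
      using abs_sub_hard_thr_entry(1)[OF E_entry[of i j], where s = "S $ i $ j"]
      by (simp only: hard_thr_def vec_lambda_beta vector_minus_component vector_add_component)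
  qed
  show "Supp (hard_thr a (S + E)) \<subseteq> Supp S"
    using abs_sub_hard_thr_entry(2)[OF E_entry] by (auto simp: Supp_def hard_thr_def)
qed

lemma max_abs_add_le: "max_abs (A + B) \<le> max_abs A + max_abs B"
proof (rule max_abs_le)
  fix i j
  have "\<bar>(A + B) $ i $ j\<bar> \<le> \<bar>A $ i $ j\<bar> + \<bar>B $ i $ j\<bar>"
    by (simp add: abs_triangle_ineq)
  also have "\<dots> \<le> max_abs A + max_abs B"
    by (intro add_mono abs_entry_le_max_abs)
  finally show "\<bar>(A + B) $ i $ j\<bar> \<le> max_abs A + max_abs B" .
qed

theorem lemma3:
  fixes F :: "real^'n^'d" and U Sg :: "real^'d^'d" and V :: "real^'d^'n"
    and W :: "real^'d^'d" and S N Lprev :: "real^'n^'n"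
    and r z t :: nat and \<mu> cW :: real
  assumes dn: "CARD('d) \<le> CARD('n)" and r_pos: "1 \<le> r" and rd: "r \<le> CARD('d)"
    and rankF: "rank F = CARD('d)"
    and svd: "compact_svd F U Sg V"
    and incoh: "\<forall>i. norm (V $ i) \<le> \<mu> * sqrt (real CARD('d) / real CARD('n))"
    and W_sym: "transpose W = W" and rankW: "rank W = r" and W_norm: "spec_norm W \<le> cW"
    and S_sym: "transpose S = S"
    and S_rows: "\<forall>i. card {j. S $ i $ j \<noteq> 0} \<le> z"
    and S_cols: "\<forall>j. card {i. S $ i $ j \<noteq> 0} \<le> z"
    and z_bound: "real z \<le> real CARD('n) /
                    (20 * \<mu>^2 * real CARD('d) * (sig_max Sg / sig_min Sg))"
    and N_sym: "transpose N = N"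
    and N_bound: "max_abs N \<le> 1 / (40 * \<mu>^2 * real CARD('d) * (sig_max Sg / sig_min Sg)^2)"
    and t1: "1 \<le> t"
    and L_bound: "max_abs (transpose F ** W ** F - Lprev) \<le>
        \<mu>^2 * (sig_max Sg)^2 * (real CARD('d) / real CARD('n)) * (cW / 5^(t-1))
        + 3 * \<mu>^2 * real CARD('d) * (sig_max Sg / sig_min Sg)^2 * max_abs N"
  shows "max_abs (S - hard_thr
            (\<mu>^2 * (sig_max Sg)^2 * (real CARD('d) / real CARD('n)) * (cW / 5^(t-1))
             + (3 * \<mu>^2 * real CARD('d) * (sig_max Sg / sig_min Sg)^2 + 1) * max_abs N)
            ((transpose F ** W ** F + S + N) - Lprev))
         \<le> 2 * \<mu>^2 * (sig_max Sg)^2 * (real CARD('d) / real CARD('n)) * (cW / 5^(t-1))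
           + 2 * (3 * \<mu>^2 * real CARD('d) * (sig_max Sg / sig_min Sg)^2 + 1) * max_abs N
    \<and> Supp (hard_thr
            (\<mu>^2 * (sig_max Sg)^2 * (real CARD('d) / real CARD('n)) * (cW / 5^(t-1))
             + (3 * \<mu>^2 * real CARD('d) * (sig_max Sg / sig_min Sg)^2 + 1) * max_abs N)
            ((transpose F ** W ** F + S + N) - Lprev)) \<subseteq> Supp S"
proof -
  define L where "L = transpose F ** W ** F"
  define a where "a = \<mu>^2 * (sig_max Sg)^2 * (real CARD('d) / real CARD('n)) * (cW / 5^(t-1))"
  define b where "b = 3 * \<mu>^2 * real CARD('d) * (sig_max Sg / sig_min Sg)^2"
  define \<zeta> where "\<zeta> = a + (b + 1) * max_abs N"
  have "max_abs ((L - Lprev) + N) \<le> max_abs (L - Lprev) + max_abs N"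
    by (rule max_abs_add_le)
  also have "\<dots> \<le> \<zeta>"
    using L_bound by (simp add: L_def a_def b_def \<zeta>_def algebra_simps)
  finally have error_bound: "max_abs ((L - Lprev) + N) \<le> \<zeta>" .
  have split: "(L + S + N) - Lprev = S + ((L - Lprev) + N)"
    by (simp add: algebra_simps)
  have "max_abs (S - hard_thr \<zeta> ((L + S + N) - Lprev)) \<le> 2 * a + 2 * (b + 1) * max_abs N"
    and "Supp (hard_thr \<zeta> ((L + S + N) - Lprev)) \<subseteq> Supp S"
    using hard_thr_perturbation[OF error_bound, of S]
    by (simp_all add: split \<zeta>_def algebra_simps)
  then show ?thesis
    by (simp add: L_def a_def b_def \<zeta>_def mult.assoc)
qed

end
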